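(* Let $k,a,b$ be positive real numbers and $\{S^{(a,b)}_{k,n}\}_{n\ge0}$ the $k$-FL sequence. For any integers $n\ge r\ge0$, $S^{(a,b)}_{k,n-r}S^{(a,b)}_{k,n+r}-(S^{(a,b)}_{k,n})^2=(-1)^{n-r+1}\{a^2-(k^2+4)b^2\}F_{k,r}^2$.
   Context: The $k$-FL sequence (for positive reals $k,a,b$) is $S^{(a,b)}_{k,0}=2b$, $S^{(a,b)}_{k,1}=bk+a$, $S^{(a,b)}_{k,n}=kS^{(a,b)}_{k,n-1}+S^{(a,b)}_{k,n-2}$. $F_{k,n}$ is the $k$-Fibonacci sequence: $F_{k,0}=0$, $F_{k,1}=1$, $F_{k,n}=kF_{k,n-1}+F_{k,n-2}$. *)

theory Defs
  imports Complex_Main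
begin

fun kfib :: "real \<Rightarrow> nat \<Rightarrow> real" where
  "kfib k 0 = 0"
| "kfib k (Suc 0) = 1"
| "kfib k (Suc (Suc n)) = k * kfib k (Suc n) + kfib k n"

fun kFL :: "real \<Rightarrow> real \<Rightarrow> real \<Rightarrow> nat \<Rightarrow> real" where
  "kFL k a b 0 = 2 * b"
| "kFL k a b (Suc 0) = b * k + a"
| "kFL k a b (Suc (Suc n)) = k * kFL k a b (Suc n) + kFL k a b n"

end

theory Submission
  imports Defs
begin

text \<open>Both sequences satisfy \<open>u (n+2) = k u (n+1) + u n\<close>, whose characteristic roots
  \<open>p, q = (k \<plusminus> \<surd>(k\<^sup>2+4)) / 2\<close> satisfy \<open>p q = -1\<close>. Writing \<open>S\<^sub>n = c p\<^sup>n + d q\<^sup>n\<close> (Binet),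
  the cross terms of \<open>S\<^sub>n\<^sub>-\<^sub>r S\<^sub>n\<^sub>+\<^sub>r - S\<^sub>n\<^sup>2\<close> collapse to \<open>c d (p q)\<^sup>n\<^sup>-\<^sup>r (p\<^sup>r - q\<^sup>r)\<^sup>2\<close>, and
  \<open>p\<^sup>r - q\<^sup>r = \<surd>(k\<^sup>2+4) F\<^sub>k\<^sub>,\<^sub>r\<close>, \<open>c d (k\<^sup>2+4) = (k\<^sup>2+4) b\<^sup>2 - a\<^sup>2\<close>.\<close>

lemma linear_recurrence_closed_form:
  fixes u :: "nat \<Rightarrow> 'a::comm_ring_1"
  assumes rec: "\<And>n. u (Suc (Suc n)) = k * u (Suc n) + u n"
    and p: "p^2 = k * p + 1" and q: "q^2 = k * q + 1"
    and u0: "u 0 = c + d" and u1: "u 1 = c * p + d * q"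
  shows "u n = c * p^n + d * q^n"
proof -
  have "u n = c * p^n + d * q^n \<and> u (Suc n) = c * p^Suc n + d * q^Suc n"
  proof (induction n)
    case 0
    then show ?case using u0 u1 by simp
  next
    case (Suc n)
    have "p^Suc (Suc n) = p^n * p^2" "q^Suc (Suc n) = q^n * q^2"
      by (simp_all add: power2_eq_square)
    then have "p^Suc (Suc n) = k * p^Suc n + p^n" "q^Suc (Suc n) = k * q^Suc n + q^n"
      unfolding p q by (simp_all add: algebra_simps)
    with Suc.IH rec show ?case by (simp add: algebra_simps)
  qed
  then show ?thesis ..
qed

lemma binet_form_catalan:
  fixes c d p q :: "'a::comm_ring_1"
  shows "(c * p^m + d * q^m) * (c * p^(m + 2*r) + d * q^(m + 2*r)) - (c * p^(m + r) + d * q^(m + r))^2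
         = c * d * (p * q)^m * (p^r - q^r)^2"
  by (simp add: power_add power_mult power_mult_distrib power2_eq_square algebra_simps)

lemma root_of_sum_prod:
  fixes p q :: "'a::comm_ring_1"
  assumes "p + q = k" and "p * q = -1"
  shows "p^2 = k * p + 1"
proof -
  have "p^2 = p * (p + q) - p * q"
    by (simp add: power2_eq_square algebra_simps)
  with assms show ?thesis
    by (simp add: mult.commute)
qed

lemma kfib_binet:
  assumes "p + q = k" and "p * q = -1"
  shows "(p - q) * kfib k n = p^n - q^n"
proof -
  have p: "p^2 = k * p + 1" and q: "q^2 = k * q + 1"
    using root_of_sum_prod assms by (metis add.commute mult.commute)+
  have "(p - q) * kfib k n = 1 * p^n + (-1) * q^n"
    by (rule linear_recurrence_closed_form[where u = "\<lambda>j. (p - q) * kfib k j", OF _ p q])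
       (simp_all add: algebra_simps)
  then show ?thesis
    by simp
qed

lemma kFL_binet:
  assumes "p + q = k" and "p * q = -1" and "p - q = s" and "s \<noteq> 0"
  shows "kFL k a b n = (a + b * s) / s * p^n + (b * s - a) / s * q^n"
proof -
  have p: "p^2 = k * p + 1" and q: "q^2 = k * q + 1"
    using root_of_sum_prod assms(1,2) by (metis add.commute mult.commute)+
  have "(a + b * s) * p + (b * s - a) * q = (b * k + a) * s"
    by (simp flip: assms(1,3) add: algebra_simps)
  then have "(a + b * s) / s * p + (b * s - a) / s * q = b * k + a"
    using \<open>s \<noteq> 0\<close> by (metis add_divide_distrib nonzero_mult_div_cancel_right times_divide_eq_left)
  moreover have "(a + b * s) / s + (b * s - a) / s = 2 * b"
    using \<open>s \<noteq> 0\<close> by (simp add: field_simps)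
  ultimately show ?thesis
    by (intro linear_recurrence_closed_form[OF _ p q]) simp_all
qed

theorem theorem4p18:
  fixes k a b :: real and n r :: nat
  assumes "k > 0" and "a > 0" and "b > 0" and "r \<le> n"
  shows "kFL k a b (n - r) * kFL k a b (n + r) - (kFL k a b n)^2
         = (-1) ^ (n - r + 1) * (a^2 - (k^2 + 4) * b^2) * (kfib k r)^2"
proof -
  define s where "s = sqrt (k^2 + 4)"
  have "k^2 + 4 > 0"
    by (simp add: add_nonneg_pos)
  then have s2: "s^2 = k^2 + 4" and "s \<noteq> 0"
    unfolding s_def by simp_all
  define p q where "p = (k + s) / 2" and "q = (k - s) / 2"
  have roots: "p + q = k" "p * q = -1" and "p - q = s"
    unfolding p_def q_def using s2 by (simp_all add: field_simps power2_eq_square)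
  define c d where "c = (a + b * s) / s" and "d = (b * s - a) / s"
  have "c * d * s^2 = b^2 * s^2 - a^2"
    using \<open>s \<noteq> 0\<close> by (simp add: c_def d_def field_simps power2_eq_square)
  then have cd: "c * d * s^2 = (k^2 + 4) * b^2 - a^2"
    by (simp add: s2 mult.commute)
  have kFL_eq: "kFL k a b j = c * p^j + d * q^j" for j
    using kFL_binet[OF roots(1,2) \<open>p - q = s\<close> \<open>s \<noteq> 0\<close>] by (simp add: c_def d_def)
  have kfib_eq: "s * kfib k r = p^r - q^r"
    using kfib_binet[OF roots(1,2)] \<open>p - q = s\<close> by simp
  obtain m where m: "n = m + r"
    using \<open>r \<le> n\<close> le_iff_add add.commute by metis
  have "kFL k a b m * kFL k a b (m + 2*r) - (kFL k a b (m + r))^2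
        = c * d * (p * q)^m * (p^r - q^r)^2"
    unfolding kFL_eq by (rule binet_form_catalan)
  also have "\<dots> = c * d * (-1)^m * (s * kfib k r)^2"
    by (simp only: roots(2) kfib_eq)
  also have "\<dots> = (-1)^m * (c * d * s^2) * (kfib k r)^2"
    by (simp add: power_mult_distrib)
  also have "\<dots> = (-1) ^ (m + 1) * (a^2 - (k^2 + 4) * b^2) * (kfib k r)^2"
    unfolding cd by (simp add: algebra_simps)
  finally show ?thesis
    by (simp add: m mult_2 add.assoc)
qed

end
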